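(* Let $F:\mathbb{R}\to\mathbb{R}^3$ be a smooth, periodic (closed) regular curve, with period interval $I$, having nowhere vanishing Euclidean curvature $k$ and such that $f=\chi\circ F$ is a $1$-generic curve in $\mathbb{Q}_3$, i.e. $(k')^2+k^2\tau^2\neq0$ everywhere, where $\tau$ is the Euclidean torsion and $'=d/ds_e$ with $s_e$ the Euclidean arclength. Let $s$ be the conformal arclength and $\mu_2$ the second conformal curvature of $f$. Then $$\frac1{2\pi}\int_I\mu_2\,ds\equiv\frac1{2\pi}\int_I\tau\,ds_e\pmod{\mathbb{Z}}.$$ In particular the total twist $\mathrm{Tw}(F)=\frac1{2\pi}\int_I\tau\,ds_e\ (\mathrm{mod}\ \mathbb{Z})$ is invariant under conformal (Möbius) transformations.
   Context: $\chi:\mathbb{R}^3\to\mathbb{Q}_3$, $\chi(x)=[1:x:\tfrac12|x|^2]$, is the conformal embedding of $\mathbb{R}^3$ into the conformal sphere $\mathbb{Q}_3$ = projectivization of the null cone of $\langle v,w\rangle=\sum_{A=1}^3v^Aw^A-v^0w^4-v^4w^0$ on $\mathbb{R}^5$; $\mathrm{M\ddot{o}b}(3)$ is the identity component of the isometry group of this form. For a 1-generic curve $f$ in $\mathbb{Q}_3$ there is a Frenet frame $e:I\to\mathrm{M\ddot{o}b}(3)$, $[e_0]=f$, and smooth functions $\mu_1,\mu_2$ (of arbitrary sign) such that, with $\dot{}=d/ds$: $\dot e_0=e_1$, $\dot e_1=\mu_1e_0+e_4$, $\dot e_2=e_0+\mu_2e_3$, $\dot e_3=-\mu_2e_2$,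 $\dot e_4=\mu_1e_1+e_2$; here $s$ is the conformal arclength and $\mu_1,\mu_2$ are the conformal curvatures. *)

theory Defs
  imports "HOL-Analysis.Analysis"
begin

text \<open>Coordinate convention: a vector v in R^5 with coordinates (v^0,...,v^4) is
  represented as v :: real^5 with v^i = v $ (i+1).\<close>

definition lor :: "real^5 \<Rightarrow> real^5 \<Rightarrow> real" where
  "lor v w = v$2 * w$2 + v$3 * w$3 + v$4 * w$4 - v$1 * w$5 - v$5 * w$1"

text \<open>The isometry group of the form, and its identity component Moeb(3).
  Elements of Moeb(3) are 5x5 matrices; the frame vectors e_0..e_4 are the columns.\<close>

definition lor_isom :: "(real^5^5) set" where
  "lor_isom = {A. \<forall>v w. lor (A *v v) (A *v w) = lor v w}"

definition Moeb3 :: "(real^5^5) set" where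
  "Moeb3 = connected_component_set lor_isom (mat 1)"

definition fv :: "real^5^5 \<Rightarrow> nat \<Rightarrow> real^5" where
  "fv A j = column (of_nat (j+1)) A"

text \<open>Conformal embedding chi(x) = (1, x, |x|^2/2) (representative of [1:x:|x|^2/2]).\<close>
definition chi :: "real^3 \<Rightarrow> real^5" where
  "chi x = vector [1, x$1, x$2, x$3, (norm x)^2 / 2]"

definition vd :: "(real \<Rightarrow> 'a::real_normed_vector) \<Rightarrow> real \<Rightarrow> 'a" where
  "vd f = (\<lambda>t. vector_derivative f (at t))"

definition smooth :: "(real \<Rightarrow> 'a::real_normed_vector) \<Rightarrow> bool" where
  "smooth f \<longleftrightarrow> (\<forall>n t. ((vd ^^ n) f) differentiable (at t))"

text \<open>Euclidean curvature, torsion (in terms of an arbitrary regular parameter t),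
  and the Euclidean speed ds_e/dt.\<close>
definition speed :: "(real \<Rightarrow> real^3) \<Rightarrow> real \<Rightarrow> real" where
  "speed F t = norm (vd F t)"

definition curv :: "(real \<Rightarrow> real^3) \<Rightarrow> real \<Rightarrow> real" where
  "curv F t = norm (cross3 (vd F t) (vd (vd F) t)) / (speed F t) ^ 3"

definition tors :: "(real \<Rightarrow> real^3) \<Rightarrow> real \<Rightarrow> real" where
  "tors F t = (cross3 (vd F t) (vd (vd F) t) \<bullet> vd (vd (vd F)) t)
              / (norm (cross3 (vd F t) (vd (vd F) t)))^2"

text \<open>k' = dk/ds_e, derivative of the curvature w.r.t. Euclidean arclength.\<close>
definition curv_e' :: "(real \<Rightarrow> real^3) \<Rightarrow> real \<Rightarrow> real" where
  "curv_e' F t = deriv (curv F) t / speed F t"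

text \<open>Conformal Frenet frame along chi o F: e(t) in Moeb(3), [e_0] = chi(F(t)),
  s the conformal arclength with ds/dt = sigma t > 0, and the structure equations
  d e_i/ds = ... with conformal curvatures mu1, mu2 (as functions of t).\<close>
definition conformal_frenet ::
  "(real \<Rightarrow> real^3) \<Rightarrow> (real \<Rightarrow> real^5^5) \<Rightarrow> (real \<Rightarrow> real) \<Rightarrow> (real \<Rightarrow> real)
     \<Rightarrow> (real \<Rightarrow> real) \<Rightarrow> bool" where
  "conformal_frenet F e s mu1 mu2 \<longleftrightarrow>
     smooth e \<and> smooth s \<and> smooth mu1 \<and> smooth mu2 \<and>
     (\<forall>t. e t \<in> Moeb3) \<and>
     (\<forall>t. \<exists>c. c \<noteq> 0 \<and> fv (e t) 0 = c *\<^sub>R chi (F t)) \<and>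
     (\<forall>t. deriv s t > 0) \<and>
     (\<forall>t. ((\<lambda>u. fv (e u) 0) has_vector_derivative
            deriv s t *\<^sub>R fv (e t) 1) (at t)) \<and>
     (\<forall>t. ((\<lambda>u. fv (e u) 1) has_vector_derivative
            deriv s t *\<^sub>R (mu1 t *\<^sub>R fv (e t) 0 + fv (e t) 4)) (at t)) \<and>
     (\<forall>t. ((\<lambda>u. fv (e u) 2) has_vector_derivative
            deriv s t *\<^sub>R (fv (e t) 0 + mu2 t *\<^sub>R fv (e t) 3)) (at t)) \<and>
     (\<forall>t. ((\<lambda>u. fv (e u) 3) has_vector_derivative
            deriv s t *\<^sub>R ((- mu2 t) *\<^sub>R fv (e t) 2)) (at t)) \<and>
     (\<forall>t. ((\<lambda>u. fv (e u) 4) has_vector_derivative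
            deriv s t *\<^sub>R (mu1 t *\<^sub>R fv (e t) 1 + fv (e t) 2)) (at t))"

end

theory Submission
  imports Defs
begin

(* Let e = (e_0,...,e_4) be the conformal Frenet frame along chi o F.  Subtracting from
   e_j the multiple (e_j)^0 chi(F) of the point itself gives a vector of R^3,
   m_j = spatial e_j F.  For j = 1,2,3 these are orthonormal (the Lorentz form restricts
   to the Euclidean inner product on them), m_1 is the unit tangent T, and since
   det e > 0 on Moeb(3) the frame (m_1,m_2,m_3) is positively oriented.  Hence
   m_2 = cos A * N + sin A * B and m_3 = T x m_2 for an angle function A, and the
   structure equations together with the Euclidean Frenet equations give
        A' = mu_2 ds/dt - tau ds_e/dt.
   Moreover (cos A, sin A) is proportional to (k', k tau), hence periodic, so the
   integral of A' over a period is a multiple of 2 pi; this is the theorem. *)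

lemma exhaust_5:
  fixes x :: 5
  shows "x = 1 \<or> x = 2 \<or> x = 3 \<or> x = 4 \<or> x = 5"
proof (induct x)
  case (of_int z)
  then have "z = 0 \<or> z = 1 \<or> z = 2 \<or> z = 3 \<or> z = 4" by fastforce
  then show ?case by auto
qed

lemma UNIV_5: "UNIV = {1, 2, 3, 4, 5::5}"
  using exhaust_5 by auto

lemma sum_5: "sum f (UNIV::5 set) = f 1 + f 2 + f 3 + f 4 + f 5"
  unfolding UNIV_5 by (simp add: ac_simps)

lemma vec5_eq: "(v::'a^5) = w \<longleftrightarrow> v$1 = w$1 \<and> v$2 = w$2 \<and> v$3 = w$3 \<and> v$4 = w$4 \<and> v$5 = w$5"
proof
  assume "v$1 = w$1 \<and> v$2 = w$2 \<and> v$3 = w$3 \<and> v$4 = w$4 \<and> v$5 = w$5"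
  then have "v$i = w$i" for i using exhaust_5[of i] by auto
  then show "v = w" by (simp add: vec_eq_iff)
qed simp

lemma vec3_eq: "(v::'a^3) = w \<longleftrightarrow> v$1 = w$1 \<and> v$2 = w$2 \<and> v$3 = w$3"
proof
  assume "v$1 = w$1 \<and> v$2 = w$2 \<and> v$3 = w$3"
  then have "v$i = w$i" for i using exhaust_3[of i] by auto
  then show "v = w" by (simp add: vec_eq_iff)
qed simp

lemma norm3_sq: "(norm (x::real^3))^2 = x$1*x$1 + x$2*x$2 + x$3*x$3"
  by (simp add: power2_norm_eq_inner inner_vec_def sum_3)

lemma vector_5 [simp]:
 "(vector [a,b,c,d,e] ::('a::zero)^5)$1 = a"
 "(vector [a,b,c,d,e] ::('a::zero)^5)$2 = b"
 "(vector [a,b,c,d,e] ::('a::zero)^5)$3 = c"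
 "(vector [a,b,c,d,e] ::('a::zero)^5)$4 = d"
 "(vector [a,b,c,d,e] ::('a::zero)^5)$5 = e"
  unfolding vector_def by simp_all

lemma chi_nth [simp]: "chi x $ 1 = 1" "chi x $ 2 = x$1" "chi x $ 3 = x$2" "chi x $ 4 = x$3"
  "chi x $ 5 = (norm x)^2 / 2"
  by (simp_all add: chi_def)

lemma lor_axis:
  "lor v (axis 1 1) = - v$5" "lor v (axis 2 1) = v$2" "lor v (axis 3 1) = v$3"
  "lor v (axis 4 1) = v$4" "lor v (axis 5 1) = - v$1"
  by (simp_all add: lor_def axis_def)

lemma lor_scale: "lor (a *\<^sub>R v) w = a * lor v w" "lor v (a *\<^sub>R w) = a * lor v w"
  by (simp_all add: lor_def algebra_simps)

lemma lor_chi_chi: "lor (chi x) (chi x) = 0"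
  by (simp add: lor_def norm3_sq algebra_simps)

text \<open>The form is nondegenerate, so an isometry has trivial kernel.\<close>

lemma isom_kernel:
  assumes "A \<in> lor_isom" "A *v v = 0"
  shows "v = 0"
proof -
  have l: "lor v w = 0" for w
  proof -
    have "lor v w = lor (A *v v) (A *v w)" using assms(1) by (simp add: lor_isom_def)
    also have "\<dots> = 0" using assms(2) by (simp add: lor_def)
    finally show ?thesis .
  qed
  have "v $ i = 0" for i
    using exhaust_5[of i] l[of "axis 1 1"] l[of "axis 2 1"] l[of "axis 3 1"]
      l[of "axis 4 1"] l[of "axis 5 1"] by (auto simp: lor_axis)
  then show ?thesis by (simp add: vec_eq_iff)
qed

lemma isom_det_nz:
  assumes "A \<in> lor_isom"
  shows "det A \<noteq> 0"
proof -
  have "inj ((*v) A)"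
  proof (rule injI)
    fix x y assume "A *v x = A *v y"
    then have "A *v (x - y) = 0" by (simp add: matrix_vector_mult_diff_distrib)
    then show "x = y" using isom_kernel[OF assms \<open>A *v (x - y) = 0\<close>] by simp
  qed
  then have "det (matrix ((*v) A)) \<noteq> 0"
    using det_nz_iff_inj[of "(*v) A"] by (simp add: matrix_vector_mul_linear)
  then show ?thesis by simp
qed

text \<open>An isometry maps the null vector \<open>axis 1 1\<close> to a nonzero null vector, which is never
  orthogonal to the timelike vector \<open>axis 1 1 + axis 5 1\<close>: its coordinates satisfy
  \<open>v1^2 + v2^2 + v3^2 = 2 v0 v4\<close>, so \<open>v0 + v4 = 0\<close> forces \<open>v = 0\<close>.\<close>

lemma isom_null_col:
  assumes "A \<in> lor_isom"
  shows "A$1$1 + A$5$1 \<noteq> 0"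
proof
  assume h: "A$1$1 + A$5$1 = 0"
  let ?v = "A *v axis 1 1"
  have vv: "lor ?v ?v = 0" using assms by (simp add: lor_isom_def lor_def axis_def)
  have c: "?v $ i = A $ i $ 1" for i
    by (simp add: matrix_vector_mult_basis column_def)
  have null: "(A$2$1)^2 + (A$3$1)^2 + (A$4$1)^2 = 2 * A$1$1 * A$5$1"
    using vv unfolding c lor_def by (simp add: power2_eq_square algebra_simps)
  have "(A$2$1)^2 + (A$3$1)^2 + (A$4$1)^2 + 2 * (A$1$1)^2 = 0"
    using null h by (simp add: eq_neg_iff_add_eq_0[symmetric] power2_eq_square algebra_simps)
  then have "(A$2$1)^2 = 0 \<and> (A$3$1)^2 = 0 \<and> (A$4$1)^2 = 0 \<and> (A$1$1)^2 = 0"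
    using zero_le_power2[of "A$2$1"] zero_le_power2[of "A$3$1"]
      zero_le_power2[of "A$4$1"] zero_le_power2[of "A$1$1"] by linarith
  then have "?v $ i = 0" for i using h exhaust_5[of i] unfolding c by auto
  then have "?v = 0" by (simp add: vec_eq_iff)
  then have "axis 1 (1::real) = (0::real^5)" using isom_kernel[OF assms] by blast
  then show False by (simp add: axis_eq_0_iff)
qed

lemma moeb_positive:
  fixes f :: "real^5^5 \<Rightarrow> real"
  assumes "continuous_on UNIV f" "\<And>A. A \<in> lor_isom \<Longrightarrow> f A \<noteq> 0" "f (mat 1) > 0"
    "A \<in> Moeb3"
  shows "f A > 0"
proof (rule ccontr)
  assume "\<not> f A > 0"
  then have fa: "f A \<le> 0" by simp
  have "mat 1 \<in> lor_isom" by (simp add: lor_isom_def)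
  then have I: "mat 1 \<in> Moeb3" unfolding Moeb3_def by (simp add: connected_component_refl)
  have "connected (f ` Moeb3)"
    unfolding Moeb3_def
    by (rule connected_continuous_image) (auto intro: continuous_on_subset[OF assms(1)])
  then have "0 \<in> f ` Moeb3"
    unfolding connected_iff_interval using I assms(3,4) fa
    by (metis imageI less_eq_real_def)
  then obtain B where "B \<in> Moeb3" "f B = 0" by auto
  moreover have "B \<in> lor_isom"
    using \<open>B \<in> Moeb3\<close> connected_component_subset unfolding Moeb3_def by blast
  ultimately show False using assms(2) by blast
qed

lemma moeb_isom: "A \<in> Moeb3 \<Longrightarrow> A \<in> lor_isom"
  using connected_component_subset unfolding Moeb3_def by blast

lemma moeb_det: "A \<in> Moeb3 \<Longrightarrow> det A > 0"
proof (rule moeb_positive)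
  show "continuous_on UNIV (det :: real^5^5 \<Rightarrow> real)"
    unfolding det_def by (intro continuous_intros)
qed (auto simp: isom_det_nz)

lemma moeb_future: "A \<in> Moeb3 \<Longrightarrow> A$1$1 + A$5$1 > 0"
  by (rule moeb_positive[of "\<lambda>A. A$1$1 + A$5$1"])
    (auto intro!: continuous_intros simp: isom_null_col mat_def)

lemma fv_eq: "fv A j = A *v axis (of_nat (j+1)) 1"
  by (simp add: fv_def column_def matrix_vector_mult_def axis_def vec_eq_iff if_distrib cong: if_cong)

lemma moeb_gram:
  assumes "A \<in> Moeb3"
  shows "lor (fv A i) (fv A j) = lor (axis (of_nat (i+1)) 1) (axis (of_nat (j+1)) 1)"
  using moeb_isom[OF assms] by (simp add: fv_eq lor_isom_def)

text \<open>Decomposition of \<open>real^5\<close> relative to a point \<open>x\<close> of \<open>R\<^sup>3\<close>: a vector \<open>v\<close> is determined by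
  its coefficient \<open>v\<^sup>0\<close> of \<open>chi x\<close>, its spatial part \<open>spatial v x\<close> and its pairing \<open>chi_pair v x\<close>
  with \<open>chi x\<close>.\<close>

definition space_part :: "real^5 \<Rightarrow> real^3" where
  "space_part v = vector [v$2, v$3, v$4]"

definition spatial :: "real^5 \<Rightarrow> real^3 \<Rightarrow> real^3" where
  "spatial v x = space_part v - (v$1) *\<^sub>R x"

definition chi_pair :: "real^5 \<Rightarrow> real^3 \<Rightarrow> real" where
  "chi_pair v x = - lor v (chi x)"

lemma space_part_nth [simp]:
  "space_part v $ 1 = v$2" "space_part v $ 2 = v$3" "space_part v $ 3 = v$4"
  by (simp_all add: space_part_def)

lemma spatial_nth [simp]: "spatial v x $ 1 = v$2 - v$1 * x$1" "spatial v x $ 2 = v$3 - v$1 * x$2"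
   "spatial v x $ 3 = v$4 - v$1 * x$3"
  by (simp_all add: spatial_def)

lemma lor_decomp:
  "lor v w = spatial v x \<bullet> spatial w x - v$1 * chi_pair w x - chi_pair v x * w$1"
  by (simp add: lor_def chi_pair_def inner_vec_def sum_3 norm3_sq algebra_simps)

lemma spatial_chi: "spatial (c *\<^sub>R chi x) x = 0"
  by (simp add: vec3_eq)

lemma spatial_add: "spatial (v + w) x = spatial v x + spatial w x"
  by (simp add: vec3_eq algebra_simps)

lemma spatial_scale: "spatial (a *\<^sub>R v) x = a *\<^sub>R spatial v x"
  by (simp add: vec3_eq algebra_simps)

lemma bounded_linear_space_part: "bounded_linear space_part"
proof -
  have "linear space_part"
    by (rule linearI) (simp_all add: vec3_eq)
  then show ?thesis by (simp add: linear_conv_bounded_linear)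
qed

lemma hvd_spatial:
  assumes "(v has_vector_derivative v') (at t)" "(F has_vector_derivative F') (at t)"
  shows "((\<lambda>u. spatial (v u) (F u)) has_vector_derivative
           (spatial v' (F t) - (v t $ 1) *\<^sub>R F')) (at t)"
proof -
  have a: "((\<lambda>u. space_part (v u)) has_vector_derivative space_part v') (at t)"
    by (rule bounded_linear.has_vector_derivative[OF bounded_linear_space_part assms(1)])
  have b: "((\<lambda>u. v u $ 1) has_real_derivative v' $ 1) (at t)"
    using bounded_linear.has_vector_derivative[OF bounded_linear_vec_nth assms(1)]
    by (simp add: has_real_derivative_iff_has_vector_derivative)
  have "((\<lambda>u. space_part (v u) - (v u $ 1) *\<^sub>R F u) has_vector_derivative
      (space_part v' - ((v t $ 1) *\<^sub>R F' + (v' $ 1) *\<^sub>R F t))) (at t)"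
    by (intro has_vector_derivative_diff a has_vector_derivative_scaleR b assms(2))
  then show ?thesis unfolding spatial_def by (simp add: algebra_simps)
qed

text \<open>The change of basis to the adapted coordinates at \<open>x\<close>: \<open>chi_frame x\<close> has columns
  \<open>chi x\<close>, the three infinitesimal translations of \<open>chi x\<close>, and \<open>axis 5 1\<close>; it is
  unimodular, so any matrix and its matrix of adapted coordinates have the same
  determinant.\<close>

definition chi_frame :: "real^3 \<Rightarrow> real^5^5" where
  "chi_frame x = (\<chi> i j. if j = 1 then chi x $ i
     else if j = 2 then (if i = 2 then 1 else if i = 5 then x$1 else 0)
     else if j = 3 then (if i = 3 then 1 else if i = 5 then x$2 else 0)
     else if j = 4 then (if i = 4 then 1 else if i = 5 then x$3 else 0)
     else (if i = 5 then 1 else 0))"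

definition adapted_coords :: "real^5 \<Rightarrow> real^3 \<Rightarrow> real^5" where
  "adapted_coords v x = vector [v$1, spatial v x $ 1, spatial v x $ 2, spatial v x $ 3, chi_pair v x]"

definition adapted_matrix :: "real^5^5 \<Rightarrow> real^3 \<Rightarrow> real^5^5" where
  "adapted_matrix A x = (\<chi> i j. adapted_coords (A *v axis j 1) x $ i)"

lemma chi_frame_adapted: "chi_frame x *v adapted_coords v x = v"
  by (simp add: vec5_eq matrix_vector_mult_def sum_5 chi_frame_def adapted_coords_def
      chi_pair_def lor_def norm3_sq algebra_simps)

lemma adapted_factorization: "A = chi_frame x ** adapted_matrix A x"
proof -
  have "(chi_frame x ** adapted_matrix A x) $ i $ j = A $ i $ j" for i j
  proof -
    have "(chi_frame x ** adapted_matrix A x) $ i $ j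
        = (chi_frame x *v adapted_coords (A *v axis j 1) x) $ i"
      by (simp add: matrix_matrix_mult_def matrix_vector_mult_def adapted_matrix_def)
    also have "\<dots> = (A *v axis j 1) $ i" by (simp add: chi_frame_adapted)
    also have "\<dots> = A $ i $ j" by (simp add: matrix_vector_mult_basis column_def)
    finally show ?thesis .
  qed
  then show ?thesis by (simp add: vec_eq_iff)
qed

lemma det_block_5:
  fixes A :: "real^5^5"
  assumes "A$2$1 = 0" "A$3$1 = 0" "A$4$1 = 0" "A$5$1 = 0"
     "A$5$2 = 0" "A$5$3 = 0" "A$5$4 = 0"
  shows "det A = A$1$1 * A$5$5 * (
    A$2$2 * A$3$3 * A$4$4 +
    A$2$3 * A$3$4 * A$4$2 +
    A$2$4 * A$3$2 * A$4$3 -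
    A$2$2 * A$3$4 * A$4$3 -
    A$2$3 * A$3$2 * A$4$4 -
    A$2$4 * A$3$3 * A$4$2)"
proof -
  have f1: "finite {2::5, 3, 4, 5}" "1 \<notin> {2::5, 3,4,5}" by auto
  have f2: "finite {3::5, 4, 5}" "2 \<notin> {3::5,4,5}" by auto
  have f3: "finite {4::5, 5}" "3 \<notin> {4::5,5}" by auto
  have f4: "finite {5::5}" "4 \<notin> {5::5}" by auto
  show ?thesis
    unfolding det_def UNIV_5
    unfolding sum_over_permutations_insert[OF f1]
    unfolding sum_over_permutations_insert[OF f2]
    unfolding sum_over_permutations_insert[OF f3]
    unfolding sum_over_permutations_insert[OF f4]
    unfolding permutes_sing
    using assms
    by (simp add: sign_swap_id permutation_swap_id sign_compose sign_id swap_id_eq algebra_simps)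
qed

lemma det_chi_frame: "det (chi_frame x) = 1"
proof -
  have "det (chi_frame x) = det (transpose (chi_frame x))" by simp
  also have "\<dots> = 1"
    by (subst det_block_5) (simp_all add: chi_frame_def transpose_def)
  finally show ?thesis .
qed

text \<open>Determinant of a frame adapted to the point \<open>x\<close>: if \<open>e_0\<close> spans \<open>chi x\<close> and \<open>e_1, e_2, e_3\<close>
  are orthogonal to \<open>e_0\<close> while \<open>lor e_4 e_0 = -1\<close>, then the adapted matrix is block
  triangular and \<open>det A\<close> equals the triple product of the spatial parts of \<open>e_1, e_2, e_3\<close>.\<close>

lemma det_adapted_frame:
  assumes "fv A 0 = c *\<^sub>R chi x" "c \<noteq> 0"
    "lor (fv A 1) (fv A 0) = 0" "lor (fv A 2) (fv A 0) = 0"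
    "lor (fv A 3) (fv A 0) = 0" "lor (fv A 4) (fv A 0) = -1"
  shows "det A = spatial (fv A 1) x \<bullet> cross3 (spatial (fv A 2) x) (spatial (fv A 3) x)"
proof -
  have cols: "A *v axis 1 1 = fv A 0" "A *v axis 2 1 = fv A 1" "A *v axis 3 1 = fv A 2"
    "A *v axis 4 1 = fv A 3" "A *v axis 5 1 = fv A 4"
    by (simp_all add: fv_eq)
  have pair: "chi_pair (fv A j) x = - lor (fv A j) (fv A 0) / c" for j
    using assms(1,2) by (simp add: chi_pair_def lor_scale)
  have pair0: "chi_pair (fv A 0) x = 0"
    unfolding assms(1) by (simp add: chi_pair_def lor_scale lor_chi_chi)
  have pair1: "chi_pair (fv A (Suc 0)) x = 0" using pair[of 1] assms(3) by simp
  have pair2: "chi_pair (fv A 2) x = 0" using pair[of 2] assms(4) by simp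
  have pair3: "chi_pair (fv A 3) x = 0" using pair[of 3] assms(5) by simp
  have pair4: "chi_pair (fv A 4) x = 1 / c" using pair[of 4] assms(6) by simp
  have spatial0: "spatial (fv A 0) x = 0" using assms(1) by (simp add: spatial_chi)
  have first0: "fv A 0 $ 1 = c" using assms(1) by simp
  let ?K = "adapted_matrix A x"
  have K: "\<And>i j. ?K $ i $ j = adapted_coords (A *v axis j 1) x $ i"
    by (simp add: adapted_matrix_def)
  have "det A = det (chi_frame x ** ?K)" using adapted_factorization by metis
  also have "\<dots> = det ?K" by (simp add: det_mul det_chi_frame)
  also have "\<dots> = ?K$1$1 * ?K$5$5 * (
    ?K$2$2 * ?K$3$3 * ?K$4$4 +
    ?K$2$3 * ?K$3$4 * ?K$4$2 +
    ?K$2$4 * ?K$3$2 * ?K$4$3 -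
    ?K$2$2 * ?K$3$4 * ?K$4$3 -
    ?K$2$3 * ?K$3$2 * ?K$4$4 -
    ?K$2$4 * ?K$3$3 * ?K$4$2)"
    by (rule det_block_5)
      (simp_all add: K cols adapted_coords_def spatial0 pair0 pair1 pair2 pair3 pair4
        del: spatial_nth)
  also have "\<dots> = spatial (fv A 1) x \<bullet> cross3 (spatial (fv A 2) x) (spatial (fv A 3) x)"
    using assms(2)
    by (simp add: K cols adapted_coords_def pair0 pair1 pair2 pair3 pair4 first0 cross3_def
        inner_vec_def sum_3 algebra_simps del: spatial_nth)
  finally show ?thesis .
qed

lemma hvd_inner:
  assumes "(f has_vector_derivative f') (at t)" "(g has_vector_derivative g') (at t)"
  shows "((\<lambda>u. f u \<bullet> g u) has_real_derivative (f t \<bullet> g' + f' \<bullet> g t)) (at t)"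
  using bounded_bilinear.has_vector_derivative[OF bounded_bilinear_inner assms]
  by (simp add: has_real_derivative_iff_has_vector_derivative)

lemma hvd_cross:
  assumes "(f has_vector_derivative f') (at t)" "(g has_vector_derivative g') (at t)"
  shows "((\<lambda>u. cross3 (f u) (g u)) has_vector_derivative
           (cross3 (f t) g' + cross3 f' (g t))) (at t)"
proof -
  have "bounded_bilinear cross3"
    using bilinear_cross bilinear_conv_bounded_bilinear by blast
  from bounded_bilinear.has_vector_derivative[OF this assms] show ?thesis by simp
qed

lemma hvd_nth:
  assumes "(f has_vector_derivative f') (at t)"
  shows "((\<lambda>u. f u $ k) has_real_derivative f' $ k) (at t)"
  using bounded_linear.has_vector_derivative[OF bounded_linear_vec_nth assms]
  by (simp add: has_real_derivative_iff_has_vector_derivative)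

lemma hvd_norm:
  fixes f :: "real \<Rightarrow> 'a::real_inner"
  assumes "(f has_vector_derivative f') (at t)" "f t \<noteq> 0"
  shows "((\<lambda>u. norm (f u)) has_real_derivative (f t \<bullet> f') / norm (f t)) (at t)"
proof -
  have i: "((\<lambda>u. f u \<bullet> f u) has_real_derivative 2 * (f t \<bullet> f')) (at t)"
    using hvd_inner[OF assms(1) assms(1)] by (simp add: inner_commute)
  have p: "0 < f t \<bullet> f t" using assms(2) by simp
  have "((\<lambda>u. sqrt (f u \<bullet> f u)) has_real_derivative
          inverse (sqrt (f t \<bullet> f t)) / 2 * (2 * (f t \<bullet> f'))) (at t)"
    by (rule DERIV_chain2[OF DERIV_real_sqrt[OF p] i])
  then show ?thesis by (simp add: norm_eq_sqrt_inner[symmetric] divide_simps)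
qed

lemma hvd_normalize:
  fixes f :: "real \<Rightarrow> 'a::real_inner"
  assumes "(f has_vector_derivative f') (at t)" "f t \<noteq> 0"
  shows "((\<lambda>u. inverse (norm (f u)) *\<^sub>R f u) has_vector_derivative
     (inverse (norm (f t)) *\<^sub>R f' - ((f t \<bullet> f') / (norm (f t))^3) *\<^sub>R f t)) (at t)"
proof -
  have n: "((\<lambda>u. inverse (norm (f u))) has_real_derivative
      - ((f t \<bullet> f') / norm (f t) * inverse (norm (f t) ^ 2))) (at t)"
    using DERIV_inverse_fun[OF hvd_norm[OF assms]] assms(2) by (simp add: power2_eq_square)
  show ?thesis
    using has_vector_derivative_scaleR[OF n assms(1)] assms(2)
    by (simp add: field_simps power3_eq_cube power2_eq_square)
qed

lemma smooth_diff: "smooth f \<Longrightarrow> f differentiable at t"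
  unfolding smooth_def by (metis funpow_0)

lemma smooth_vd: "smooth f \<Longrightarrow> smooth (vd f)"
  unfolding smooth_def by (metis funpow_Suc_right o_apply)

lemma smooth_hvd: "smooth f \<Longrightarrow> (f has_vector_derivative vd f t) (at t)"
  unfolding vd_def using smooth_diff vector_derivative_works by blast

lemma smooth_isCont: "smooth f \<Longrightarrow> isCont f t"
  using smooth_diff differentiable_imp_continuous_within by blast

lemma deriv_vd:
  fixes g :: "real \<Rightarrow> real"
  assumes "g differentiable at t"
  shows "deriv g t = vd g t"
proof -
  have "(g has_real_derivative deriv g t) (at t)"
    using assms DERIV_deriv_iff_real_differentiable by blast
  then show ?thesis unfolding vd_def
    by (simp add: has_real_derivative_iff_has_vector_derivative vector_derivative_at)
qed

lemma vd_periodic: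
  assumes per: "\<forall>t. g (t + p) = g t" and d: "g differentiable at t"
  shows "vd g (t + p) = vd g t"
proof -
  have h: "(g has_vector_derivative vd g t) (at t)"
    using d vector_derivative_works unfolding vd_def by blast
  have s: "((\<lambda>u. u - p) has_vector_derivative 1) (at (t + p))"
    by (auto intro!: derivative_eq_intros)
  have "((g \<circ> (\<lambda>u. u - p)) has_vector_derivative (1 *\<^sub>R vd g t)) (at (t + p))"
    by (rule vector_diff_chain_at[OF s]) (simp add: h)
  moreover have "g \<circ> (\<lambda>u. u - p) = g"
    using per by (auto simp: fun_eq_iff) (metis diff_add_cancel)
  ultimately have "(g has_vector_derivative vd g t) (at (t + p))" by simp
  then show ?thesis unfolding vd_def by (simp add: vector_derivative_at)
qed

text \<open>Indeed, with \<open>Theta\<close> the integral of \<open>w\<close>, the curve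
  \<open>(a,b)\<close> rotated back by \<open>Theta\<close> has zero derivative, hence is constant.\<close>

lemma winding_number_integral:
  fixes a b w :: "real \<Rightarrow> real"
  assumes p: "p \<ge> 0"
    and da: "\<And>t. (a has_real_derivative a' t) (at t)"
    and db: "\<And>t. (b has_real_derivative b' t) (at t)"
    and unit: "\<And>t. (a t)^2 + (b t)^2 = 1"
    and closed: "a p = a 0" "b p = b 0"
    and cw: "continuous_on UNIV w"
    and w: "\<And>t. w t = a t * b' t - b t * a' t"
  shows "\<exists>n::int. integral {0..p} w = 2 * pi * of_int n"
proof -
  define \<Theta> where "\<Theta> u = integral {0..u} w" for u
  have dTheta: "(\<Theta> has_real_derivative w t) (at t within {0..p})" if "t \<in> {0..p}" for t
    unfolding \<Theta>_def has_real_derivative_iff_has_vector_derivative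
    by (rule integral_has_vector_derivative[OF continuous_on_subset[OF cw] that]) simp
  have tangent: "a t * a' t + b t * b' t = 0" for t
  proof -
    have "((\<lambda>u. (a u)^2 + (b u)^2) has_real_derivative 2 * a t * a' t + 2 * b t * b' t) (at t)"
      by (auto intro!: derivative_eq_intros da db)
    moreover have "((\<lambda>u. (a u)^2 + (b u)^2) has_real_derivative 0) (at t)"
      using unit by simp
    ultimately show ?thesis using DERIV_unique by fastforce
  qed
  have rot_a: "a' t + w t * b t = 0" for t
  proof -
    have "a' t + w t * b t = a' t * ((a t)^2 + (b t)^2) + (a t * b' t - b t * a' t) * b t"
      using unit[of t] w[of t] by simp
    also have "\<dots> = a t * (a t * a' t + b t * b' t)" by (simp add: power2_eq_square algebra_simps)
    finally show ?thesis using tangent[of t] by simp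
  qed
  have rot_b: "b' t - w t * a t = 0" for t
  proof -
    have "b' t - w t * a t = b' t * ((a t)^2 + (b t)^2) - (a t * b' t - b t * a' t) * a t"
      using unit[of t] w[of t] by simp
    also have "\<dots> = b t * (a t * a' t + b t * b' t)" by (simp add: power2_eq_square algebra_simps)
    finally show ?thesis using tangent[of t] by simp
  qed
  define G1 where "G1 u = a u * cos (\<Theta> u) + b u * sin (\<Theta> u)" for u
  define G2 where "G2 u = b u * cos (\<Theta> u) - a u * sin (\<Theta> u)" for u
  have dG1: "(G1 has_real_derivative 0) (at t within {0..p})" if "t \<in> {0..p}" for t
  proof -
    have "(G1 has_real_derivative (a' t * cos (\<Theta> t) - a t * sin (\<Theta> t) * w t
          + (b' t * sin (\<Theta> t) + b t * cos (\<Theta> t) * w t))) (at t within {0..p})"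
      unfolding G1_def
      by (auto intro!: derivative_eq_intros dTheta[OF that] has_field_derivative_at_within[OF da]
          has_field_derivative_at_within[OF db])
    moreover have "a' t * cos (\<Theta> t) - a t * sin (\<Theta> t) * w t
          + (b' t * sin (\<Theta> t) + b t * cos (\<Theta> t) * w t)
        = cos (\<Theta> t) * (a' t + w t * b t) + sin (\<Theta> t) * (b' t - w t * a t)"
      by (simp add: algebra_simps)
    ultimately show ?thesis using rot_a rot_b by simp
  qed
  have dG2: "(G2 has_real_derivative 0) (at t within {0..p})" if "t \<in> {0..p}" for t
  proof -
    have "(G2 has_real_derivative (b' t * cos (\<Theta> t) - b t * sin (\<Theta> t) * w t
          - (a' t * sin (\<Theta> t) + a t * cos (\<Theta> t) * w t))) (at t within {0..p})"
      unfolding G2_def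
      by (auto intro!: derivative_eq_intros dTheta[OF that] has_field_derivative_at_within[OF da]
          has_field_derivative_at_within[OF db])
    moreover have "b' t * cos (\<Theta> t) - b t * sin (\<Theta> t) * w t
          - (a' t * sin (\<Theta> t) + a t * cos (\<Theta> t) * w t)
        = cos (\<Theta> t) * (b' t - w t * a t) - sin (\<Theta> t) * (a' t + w t * b t)"
      by (simp add: algebra_simps)
    ultimately show ?thesis using rot_a rot_b by simp
  qed
  obtain c1 where c1: "\<forall>x\<in>{0..p}. G1 x = c1"
    using has_field_derivative_zero_constant[of "{0..p}" G1] dG1 by auto
  obtain c2 where c2: "\<forall>x\<in>{0..p}. G2 x = c2"
    using has_field_derivative_zero_constant[of "{0..p}" G2] dG2 by auto
  have "G1 p = G1 0" "G2 p = G2 0" using c1 c2 p by auto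
  then have undo: "a 0 * cos (\<Theta> p) + b 0 * sin (\<Theta> p) = a 0"
    "b 0 * cos (\<Theta> p) - a 0 * sin (\<Theta> p) = b 0"
    using closed by (simp_all add: G1_def G2_def \<Theta>_def)
  have "cos (\<Theta> p) = ((a 0)^2 + (b 0)^2) * cos (\<Theta> p)" using unit[of 0] by simp
  also have "\<dots> = a 0 * (a 0 * cos (\<Theta> p) + b 0 * sin (\<Theta> p))
                 + b 0 * (b 0 * cos (\<Theta> p) - a 0 * sin (\<Theta> p))"
    by (simp add: power2_eq_square algebra_simps)
  also have "\<dots> = 1" using undo unit[of 0] by (simp add: power2_eq_square)
  finally obtain n :: int where "\<Theta> p = of_int n * 2 * pi" using cos_one_2pi_int by blast
  then show ?thesis by (intro exI[of _ n]) (simp add: \<Theta>_def)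
qed

lemma cross_unit:
  fixes a b :: "real^3"
  assumes "a \<bullet> a = 1" "b \<bullet> b = 1" "a \<bullet> b = 0"
  shows "cross3 a b \<bullet> cross3 a b = 1"
proof -
  have na: "norm a = 1" using assms(1) by (simp add: norm_eq_sqrt_inner)
  have nb: "norm b = 1" using assms(2) by (simp add: norm_eq_sqrt_inner)
  have "(norm (cross3 a b))^2 = 1" using norm_cross[of a b] na nb assms(3) by simp
  then show ?thesis by (simp add: power2_norm_eq_inner)
qed

lemma orth_expand:
  fixes a b x :: "real^3"
  assumes "a \<bullet> a = 1" "b \<bullet> b = 1" "a \<bullet> b = 0"
  shows "x = (x \<bullet> a) *\<^sub>R a + (x \<bullet> b) *\<^sub>R b + (x \<bullet> cross3 a b) *\<^sub>R cross3 a b"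
proof -
  let ?n = "cross3 a b"
  have nn: "?n \<bullet> ?n = 1" using cross_unit[OF assms] .
  have h1: "cross3 ?n (cross3 x ?n) = x - (x \<bullet> ?n) *\<^sub>R ?n"
    using Lagrange[of ?n x ?n] nn by (simp add: inner_commute)
  have h2: "cross3 x ?n = (x \<bullet> b) *\<^sub>R a - (x \<bullet> a) *\<^sub>R b"
    using Lagrange[of x a b] .
  have h3: "cross3 ?n a = b"
    using Lagrange[of a a b] cross_skew[of ?n a] assms by (simp add: inner_commute)
  have h4: "cross3 ?n b = - a"
    using Lagrange[of b a b] cross_skew[of ?n b] assms by (simp add: inner_commute)
  have "cross3 ?n (cross3 x ?n) = (x \<bullet> b) *\<^sub>R b + (x \<bullet> a) *\<^sub>R a"
    unfolding h2 by (simp add: cross_mult_right Cross3.right_diff_distrib h3 h4)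
  then show ?thesis using h1 by (simp add: algebra_simps)
qed

text \<open>A regular space curve with nonvanishing curvature, its derivatives
  \<open>vel = F'\<close>, \<open>acc = F''\<close>, \<open>jerk = F'''\<close> (with respect to the given parameter \<open>t\<close>), the binormal
  direction \<open>C = F' \<times> F''\<close> and the Euclidean Frenet frame \<open>T, N, B\<close>.  \<open>Td, Bd, Nd\<close> are the
  \<open>t\<close>-derivatives of \<open>T, B, N\<close>, first given by explicit formulas and then identified with
  the Frenet equations.\<close>

locale frenet_curve =
  fixes F :: "real \<Rightarrow> real^3"
  assumes smoothF: "smooth F" and regular: "\<forall>t. vd F t \<noteq> 0"
    and curv_nz: "\<forall>t. curv F t \<noteq> 0"
begin

definition vel :: "real \<Rightarrow> real^3" where "vel = vd F"
definition acc :: "real \<Rightarrow> real^3" where "acc = vd vel"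
definition jerk :: "real \<Rightarrow> real^3" where "jerk = vd acc"
definition C :: "real \<Rightarrow> real^3" where "C t = cross3 (vel t) (acc t)"
definition T :: "real \<Rightarrow> real^3" where "T t = inverse (norm (vel t)) *\<^sub>R vel t"
definition B :: "real \<Rightarrow> real^3" where "B t = inverse (norm (C t)) *\<^sub>R C t"
definition N :: "real \<Rightarrow> real^3" where "N t = cross3 (B t) (T t)"
definition Td :: "real \<Rightarrow> real^3" where
  "Td t = inverse (norm (vel t)) *\<^sub>R acc t - ((vel t \<bullet> acc t) / (norm (vel t))^3) *\<^sub>R vel t"
definition Cd :: "real \<Rightarrow> real^3" where "Cd t = cross3 (vel t) (jerk t)"
definition Bd :: "real \<Rightarrow> real^3" where
  "Bd t = inverse (norm (C t)) *\<^sub>R Cd t - ((C t \<bullet> Cd t) / (norm (C t))^3) *\<^sub>R C t"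
definition Nd :: "real \<Rightarrow> real^3" where "Nd t = cross3 (B t) (Td t) + cross3 (Bd t) (T t)"

lemma smooth_vel: "smooth vel" and smooth_acc: "smooth acc" and smooth_jerk: "smooth jerk"
  unfolding vel_def acc_def jerk_def using smoothF smooth_vd by blast+

lemma dF: "(F has_vector_derivative vel t) (at t)"
  and dvel: "(vel has_vector_derivative acc t) (at t)"
  and dacc: "(acc has_vector_derivative jerk t) (at t)"
  unfolding vel_def acc_def jerk_def using smoothF smooth_vd smooth_hvd by blast+

lemma vel_nz: "vel t \<noteq> 0" using regular vel_def by simp

lemma C_nz: "C t \<noteq> 0"
proof
  assume "C t = 0"
  then have "curv F t = 0" by (simp add: curv_def C_def vel_def acc_def)
  then show False using curv_nz by simp
qed

lemma curv_eq: "curv F t = norm (C t) / (norm (vel t))^3"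
  by (simp add: curv_def C_def vel_def acc_def speed_def)

lemma tors_eq: "tors F t = (C t \<bullet> jerk t) / (norm (C t))^2"
  by (simp add: tors_def C_def vel_def acc_def jerk_def)

lemma speed_eq: "speed F t = norm (vel t)"
  by (simp add: speed_def vel_def)

lemma dT: "(T has_vector_derivative Td t) (at t)"
  unfolding T_def[abs_def] Td_def
  by (rule hvd_normalize[OF dvel[unfolded vel_def] vel_nz[unfolded vel_def], folded vel_def])

lemma dC: "(C has_vector_derivative Cd t) (at t)"
  using hvd_cross[OF dvel dacc] unfolding C_def[abs_def] Cd_def by simp

lemma dB: "(B has_vector_derivative Bd t) (at t)"
  unfolding B_def[abs_def] Bd_def by (rule hvd_normalize[OF dC C_nz])

lemma dN: "(N has_vector_derivative Nd t) (at t)"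
  unfolding N_def[abs_def] Nd_def using hvd_cross[OF dB dT] by (simp add: add.commute)

lemma vel_eq: "vel t = norm (vel t) *\<^sub>R T t"
  using vel_nz[of t] by (simp add: T_def)

lemma C_eq: "C t = norm (C t) *\<^sub>R B t"
  using C_nz[of t] by (simp add: B_def)

lemma TT: "T t \<bullet> T t = 1"
  using vel_nz[of t]
  by (simp add: T_def inner_commute power2_norm_eq_inner[symmetric] power2_eq_square)

lemma BB: "B t \<bullet> B t = 1"
  using C_nz[of t]
  by (simp add: B_def inner_commute power2_norm_eq_inner[symmetric] power2_eq_square)

lemma TB: "T t \<bullet> B t = 0"
  by (simp add: T_def B_def C_def dot_cross_self)

lemma BT: "B t \<bullet> T t = 0" using TB by (simp add: inner_commute)

lemma NN: "N t \<bullet> N t = 1"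
  unfolding N_def by (rule cross_unit[OF BB TT BT])

lemma NT: "N t \<bullet> T t = 0" and NB: "N t \<bullet> B t = 0"
  by (simp_all add: N_def dot_cross_self)

lemma TN: "T t \<bullet> N t = 0" and BN: "B t \<bullet> N t = 0"
  using NT NB by (simp_all add: inner_commute)

lemma TxN: "cross3 (T t) (N t) = B t"
  using Lagrange[of "T t" "B t" "T t"] TT[of t] TB[of t] by (simp add: N_def)

lemma TxB: "cross3 (T t) (B t) = - N t"
  using cross_skew[of "T t" "B t"] by (simp add: N_def)

lemma BxN: "cross3 (B t) (N t) = - T t"
  using Lagrange[of "B t" "B t" "T t"] BB[of t] BT[of t] by (simp add: N_def)

lemma expandTNB: "x = (x \<bullet> T t) *\<^sub>R T t + (x \<bullet> N t) *\<^sub>R N t + (x \<bullet> B t) *\<^sub>R B t"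
  using orth_expand[OF BB TT BT, of x] by (simp add: N_def[symmetric] algebra_simps)

lemma velN: "vel t \<bullet> N t = 0" and velB: "vel t \<bullet> B t = 0" and velT: "vel t \<bullet> T t = norm (vel t)"
  by (subst vel_eq; simp add: TN TB TT)+

lemma accB: "acc t \<bullet> B t = 0"
  by (simp add: B_def C_def dot_cross_self)

lemma accN: "acc t \<bullet> N t = norm (C t) / norm (vel t)"
proof -
  have "N t = (inverse (norm (C t)) * inverse (norm (vel t))) *\<^sub>R cross3 (C t) (vel t)"
    by (simp add: N_def B_def T_def cross_mult_left cross_mult_right)
  moreover have "acc t \<bullet> cross3 (C t) (vel t) = C t \<bullet> C t"
    using cross_triple[of "C t" "vel t" "acc t"] by (simp add: C_def inner_commute)
  moreover have "norm (C t) \<noteq> 0" using C_nz[of t] by simp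
  ultimately show ?thesis
    by (simp add: power2_norm_eq_inner[symmetric] power2_eq_square field_simps)
qed

lemma TC: "T t \<bullet> C t = 0"
  by (subst C_eq) (simp add: TB)

lemma NC: "N t \<bullet> C t = 0"
  by (subst C_eq) (simp add: NB)

lemma Td_eq: "Td t = (norm (C t) / (norm (vel t))^2) *\<^sub>R N t"
proof -
  have n: "norm (vel t) \<noteq> 0" using vel_nz[of t] by simp
  have d: "vel t \<bullet> vel t = norm (vel t) * norm (vel t)"
    by (simp add: power2_norm_eq_inner[symmetric] power2_eq_square)
  have "Td t \<bullet> vel t = 0" unfolding Td_def
    using n by (simp add: inner_diff_left inner_commute[of "acc t"] d power3_eq_cube field_simps)
  then have TdT: "Td t \<bullet> T t = 0" by (simp add: T_def)
  have TdN: "Td t \<bullet> N t = norm (C t) / (norm (vel t))^2"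
    using n by (simp add: Td_def accN velN inner_diff_left power2_eq_square field_simps)
  have TdB: "Td t \<bullet> B t = 0"
    by (simp add: Td_def accB velB inner_diff_left)
  show ?thesis using expandTNB[of "Td t" t] by (simp add: TdT TdN TdB)
qed

lemma Bd_eq: "Bd t = (- tors F t * norm (vel t)) *\<^sub>R N t"
proof -
  have n: "norm (C t) \<noteq> 0" using C_nz[of t] by simp
  have d: "C t \<bullet> C t = norm (C t) * norm (C t)"
    by (simp add: power2_norm_eq_inner[symmetric] power2_eq_square)
  have "C t \<bullet> Bd t = 0" unfolding Bd_def
    using n by (simp add: inner_diff_right d power3_eq_cube field_simps)
  then have BBd: "Bd t \<bullet> B t = 0" by (simp add: B_def inner_commute)
  have "T t \<bullet> Cd t = 0" by (simp add: T_def Cd_def dot_cross_self)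
  then have "T t \<bullet> Bd t = 0" by (simp add: Bd_def inner_diff_right TC)
  then have TBd: "Bd t \<bullet> T t = 0" by (simp add: inner_commute)
  have NCd: "N t \<bullet> Cd t = - (B t \<bullet> jerk t) * norm (vel t)"
  proof -
    have "N t \<bullet> Cd t = (B t \<bullet> vel t) * (T t \<bullet> jerk t) - (B t \<bullet> jerk t) * (T t \<bullet> vel t)"
      unfolding N_def Cd_def by (rule dot_cross)
    then show ?thesis using velB[of t] velT[of t] by (simp add: inner_commute)
  qed
  have "B t \<bullet> jerk t = inverse (norm (C t)) * (C t \<bullet> jerk t)" by (simp add: B_def)
  then have "N t \<bullet> Bd t = - tors F t * norm (vel t)"
    using C_nz[of t]
    by (simp add: Bd_def inner_diff_right NC NCd tors_eq power2_eq_square field_simps)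
  then have NBd: "Bd t \<bullet> N t = - tors F t * norm (vel t)" by (simp add: inner_commute)
  show ?thesis using expandTNB[of "Bd t" t] by (simp add: BBd TBd NBd)
qed

lemma Nd_eq: "Nd t = (- norm (C t) / (norm (vel t))^2) *\<^sub>R T t + (tors F t * norm (vel t)) *\<^sub>R B t"
proof -
  have "Nd t = (norm (C t) / (norm (vel t))^2) *\<^sub>R cross3 (B t) (N t)
             - (tors F t * norm (vel t)) *\<^sub>R cross3 (N t) (T t)"
    by (simp add: Nd_def Td_eq Bd_eq cross_mult_left cross_mult_right)
  moreover have "cross3 (N t) (T t) = - B t"
    using cross_skew[of "N t" "T t"] TxN[of t] by simp
  ultimately show ?thesis by (simp add: BxN)
qed

lemma cont_tors_speed: "continuous_on UNIV (\<lambda>t. tors F t * speed F t)"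
proof (intro continuous_at_imp_continuous_on ballI)
  fix t :: real
  have eq: "(\<lambda>t. tors F t * speed F t) =
      (\<lambda>t. (cross3 (vel t) (acc t) \<bullet> jerk t) / (norm (cross3 (vel t) (acc t)))^2 * norm (vel t))"
    by (auto simp: fun_eq_iff tors_eq speed_eq C_def)
  show "isCont (\<lambda>t. tors F t * speed F t) t"
    unfolding eq using smooth_isCont[OF smooth_vel] smooth_isCont[OF smooth_acc]
      smooth_isCont[OF smooth_jerk] C_nz[of t]
    by (intro continuous_intros continuous_cross) (auto simp: C_def)
qed

lemma frenet_periodic:
  assumes per: "\<forall>t. F (t + p) = F t"
  shows "vel (t + p) = vel t" and "curv F (t + p) = curv F t" and "tors F (t + p) = tors F t"
proof -
  have vel_p: "\<forall>t. vel (t + p) = vel t"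
    using vd_periodic[OF per smooth_diff[OF smoothF]] by (simp add: vel_def)
  have acc_p: "\<forall>t. acc (t + p) = acc t"
    using vd_periodic[OF vel_p smooth_diff[OF smooth_vel]] by (simp add: acc_def)
  have jerk_p: "\<forall>t. jerk (t + p) = jerk t"
    using vd_periodic[OF acc_p smooth_diff[OF smooth_acc]] by (simp add: jerk_def)
  show "vel (t + p) = vel t" using vel_p by simp
  show "curv F (t + p) = curv F t" by (simp add: curv_eq C_def vel_p acc_p)
  show "tors F (t + p) = tors F t" by (simp add: tors_eq C_def vel_p acc_p jerk_p)
qed

end

text \<open>The curve together with its conformal Frenet frame.  \<open>E j t\<close> is the frame vector
  \<open>e_j\<close>, \<open>cspeed = ds/dt\<close> the conformal speed, \<open>rho\<close> the scale with \<open>e_0 = rho chi(F)\<close>, and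
  \<open>m j t\<close> the spatial part of \<open>e_j\<close> at the point \<open>F t\<close>.\<close>

locale curve_with_frame = frenet_curve F
  for F :: "real \<Rightarrow> real^3" +
  fixes e :: "real \<Rightarrow> real^5^5" and s mu1 mu2 :: "real \<Rightarrow> real"
  assumes frame: "conformal_frenet F e s mu1 mu2"
begin

declare One_nat_def [simp del]

definition E :: "nat \<Rightarrow> real \<Rightarrow> real^5" where "E j = (\<lambda>u. fv (e u) j)"
definition cspeed :: "real \<Rightarrow> real" where "cspeed t = deriv s t"
definition rho :: "real \<Rightarrow> real" where "rho t = E 0 t $ 1"
definition m :: "nat \<Rightarrow> real \<Rightarrow> real^3" where "m j t = spatial (E j t) (F t)"

lemma smooth_s: "smooth s" and smooth_mu2: "smooth mu2"
  and moeb: "e t \<in> Moeb3" and cspeed_pos: "cspeed t > 0"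
  using frame by (simp_all add: conformal_frenet_def cspeed_def)

lemma dE0: "(E 0 has_vector_derivative cspeed t *\<^sub>R E 1 t) (at t)"
  and dE1: "(E 1 has_vector_derivative cspeed t *\<^sub>R (mu1 t *\<^sub>R E 0 t + E 4 t)) (at t)"
  and dE2: "(E 2 has_vector_derivative cspeed t *\<^sub>R (E 0 t + mu2 t *\<^sub>R E 3 t)) (at t)"
  and dE4: "(E 4 has_vector_derivative cspeed t *\<^sub>R (mu1 t *\<^sub>R E 1 t + E 2 t)) (at t)"
  using frame by (simp_all add: conformal_frenet_def E_def cspeed_def)

lemma E0: "E 0 t = rho t *\<^sub>R chi (F t)"
proof -
  obtain c where "fv (e t) 0 = c *\<^sub>R chi (F t)"
    using frame unfolding conformal_frenet_def by blast
  then show ?thesis by (simp add: rho_def E_def)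
qed

text \<open>Since \<open>e_0\<close> is future directed and \<open>chi(F)\<close> has \<open>chi^0 + chi^4 > 0\<close>, the scale is positive.\<close>

lemma rho_pos: "rho t > 0"
proof -
  have "e t $1$1 + e t$5$1 > 0" using moeb_future[OF moeb] .
  moreover have "e t $ i $ 1 = E 0 t $ i" for i by (simp add: E_def fv_def column_def)
  ultimately have "E 0 t $ 1 + E 0 t $ 5 > 0" by simp
  then have "rho t * (1 + (norm (F t))^2 / 2) > 0"
    using E0[of t] by (simp add: algebra_simps)
  moreover have "1 + (norm (F t))^2 / 2 > 0" by (simp add: add_pos_nonneg)
  ultimately show ?thesis by (simp add: zero_less_mult_iff)
qed

lemma gram:
  "lor (E 1 t) (E 0 t) = 0" "lor (E 2 t) (E 0 t) = 0" "lor (E 3 t) (E 0 t) = 0"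
  "lor (E 4 t) (E 0 t) = -1"
  "lor (E 1 t) (E 1 t) = 1" "lor (E 2 t) (E 2 t) = 1" "lor (E 3 t) (E 3 t) = 1"
  "lor (E 1 t) (E 2 t) = 0" "lor (E 1 t) (E 3 t) = 0" "lor (E 2 t) (E 3 t) = 0"
  unfolding E_def moeb_gram[OF moeb] by (simp_all add: lor_def axis_def)

lemma m0: "m 0 t = 0"
  by (simp add: m_def E0 spatial_chi)

lemma gram_m: "m 1 t \<bullet> m 1 t = 1" "m 2 t \<bullet> m 2 t = 1" "m 3 t \<bullet> m 3 t = 1"
  "m 1 t \<bullet> m 2 t = 0" "m 1 t \<bullet> m 3 t = 0" "m 2 t \<bullet> m 3 t = 0"
proof -
  have pair: "chi_pair (E j t) (F t) = 0" if "j \<in> {1,2,3}" for j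
    using that rho_pos[of t] gram[of t] by (auto simp: chi_pair_def E0[of t] lor_scale)
  have "m i t \<bullet> m j t = lor (E i t) (E j t)" if "i \<in> {1,2,3}" "j \<in> {1,2,3}" for i j
    using that lor_decomp[of "E i t" "E j t" "F t"] pair by (simp add: m_def)
  then show "m 1 t \<bullet> m 1 t = 1" "m 2 t \<bullet> m 2 t = 1" "m 3 t \<bullet> m 3 t = 1"
    "m 1 t \<bullet> m 2 t = 0" "m 1 t \<bullet> m 3 t = 0" "m 2 t \<bullet> m 3 t = 0"
    by (simp_all add: gram)
qed

lemma dm_gen: "(E j has_vector_derivative v) (at t) \<Longrightarrow>
   (m j has_vector_derivative (spatial v (F t) - E j t $ 1 *\<^sub>R vel t)) (at t)"
  unfolding m_def[abs_def] by (rule hvd_spatial[OF _ dF])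

lemma dm1: "(m 1 has_vector_derivative (cspeed t *\<^sub>R m 4 t - E 1 t $ 1 *\<^sub>R vel t)) (at t)"
  using dm_gen[OF dE1[of t]] m0[of t] by (simp add: spatial_scale spatial_add m_def)

lemma dm2: "(m 2 has_vector_derivative ((cspeed t * mu2 t) *\<^sub>R m 3 t - E 2 t $ 1 *\<^sub>R vel t)) (at t)"
  using dm_gen[OF dE2[of t]] m0[of t] by (simp add: spatial_scale spatial_add m_def)

lemma dm4: "(m 4 has_vector_derivative
               (cspeed t *\<^sub>R (mu1 t *\<^sub>R m 1 t + m 2 t) - E 4 t $ 1 *\<^sub>R vel t)) (at t)"
  using dm_gen[OF dE4[of t]] by (simp add: spatial_scale spatial_add m_def)

text \<open>Differentiating \<open>m 0 = 0\<close> gives \<open>cspeed m_1 = rho F'\<close>: hence \<open>m 1\<close> is the unit tangent and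
  \<open>ds/dt = rho |F'|\<close>.\<close>

lemma m1_raw: "cspeed t *\<^sub>R m 1 t = rho t *\<^sub>R vel t"
proof -
  have "(m 0 has_vector_derivative (cspeed t *\<^sub>R m 1 t - rho t *\<^sub>R vel t)) (at t)"
    using dm_gen[OF dE0[of t]] by (simp add: spatial_scale m_def rho_def)
  moreover have "m 0 = (\<lambda>_. 0)" using m0 by auto
  then have "(m 0 has_vector_derivative 0) (at t)" by simp
  ultimately have "0 = cspeed t *\<^sub>R m 1 t - rho t *\<^sub>R vel t"
    using vector_derivative_unique_at by blast
  then show ?thesis by simp
qed

lemma cspeed_eq: "cspeed t = rho t * norm (vel t)"
proof -
  have n1: "norm (m 1 t) = 1" using gram_m(1)[of t] by (simp add: norm_eq_sqrt_inner)
  have "cspeed t = norm (cspeed t *\<^sub>R m 1 t)"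
    using cspeed_pos[of t] n1 by simp
  also have "\<dots> = rho t * norm (vel t)" using m1_raw[of t] rho_pos[of t] by simp
  finally show ?thesis .
qed

lemma m1T: "m 1 t = T t"
proof -
  have "m 1 t = inverse (cspeed t) *\<^sub>R (rho t *\<^sub>R vel t)"
    using m1_raw[of t] cspeed_pos[of t] by (metis less_irrefl scaleR_scaleR left_inverse scaleR_one)
  then show ?thesis
    using rho_pos[of t] vel_nz[of t] by (simp add: T_def cspeed_eq)
qed

text \<open>Differentiating \<open>m 1 = T\<close> and comparing with the Frenet equation for \<open>T\<close> expresses
  \<open>m 4\<close> in the Euclidean frame; in particular \<open>m 4 \<bullet> N = k / rho\<close> and \<open>m 4 \<bullet> B = 0\<close>.\<close>

lemma m4_eq: "m 4 t = inverse (cspeed t) *\<^sub>R (Td t + E 1 t $ 1 *\<^sub>R vel t)"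
proof -
  have "m 1 = T" using m1T by auto
  then have "(m 1 has_vector_derivative Td t) (at t)" using dT by simp
  then have "Td t = cspeed t *\<^sub>R m 4 t - E 1 t $ 1 *\<^sub>R vel t"
    using vector_derivative_unique_at dm1 by blast
  then have "cspeed t *\<^sub>R m 4 t = Td t + E 1 t $ 1 *\<^sub>R vel t" by (simp add: algebra_simps)
  then show ?thesis
    using cspeed_pos[of t] by (metis less_irrefl scaleR_scaleR left_inverse scaleR_one)
qed

lemma m4_coords:
  shows m4N: "m 4 t \<bullet> N t = curv F t / rho t"
    and m4B: "m 4 t \<bullet> B t = 0"
    and m4Nd: "m 4 t \<bullet> Nd t = - E 1 t $ 1 * norm (C t) / (norm (vel t) * cspeed t)"
    and m4Bd: "m 4 t \<bullet> Bd t = - (norm (C t) / (norm (vel t))^2) * tors F t * norm (vel t) / cspeed t"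
proof -
  have TdT: "Td t \<bullet> T t = 0" and TdB: "Td t \<bullet> B t = 0"
    by (simp_all add: Td_eq NT NB)
  show "m 4 t \<bullet> N t = curv F t / rho t"
    using rho_pos[of t] vel_nz[of t]
    by (simp add: m4_eq Td_eq inner_add_left NN velN curv_eq cspeed_eq power2_eq_square
        power3_eq_cube field_simps)
  show "m 4 t \<bullet> B t = 0"
    by (simp add: m4_eq inner_add_left TdB velB)
  show "m 4 t \<bullet> Nd t = - E 1 t $ 1 * norm (C t) / (norm (vel t) * cspeed t)"
  proof -
    have velNd: "vel t \<bullet> Nd t = - norm (C t) / norm (vel t)"
      using vel_nz[of t] by (simp add: Nd_eq inner_add_right inner_diff_right velT velB power2_eq_square)
    have NNd: "N t \<bullet> Nd t = 0" by (simp add: Nd_eq inner_add_right inner_diff_right NT NB)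
    show ?thesis by (simp add: m4_eq Td_eq inner_add_left velNd NNd field_simps)
  qed
  show "m 4 t \<bullet> Bd t = - (norm (C t) / (norm (vel t))^2) * tors F t * norm (vel t) / cspeed t"
    by (simp add: m4_eq Td_eq Bd_eq inner_add_left NN velN field_simps)
qed

text \<open>Differentiating \<open>k = rho (m 4 \<bullet> N)\<close> and \<open>0 = m 4 \<bullet> B\<close> with the structure equation for
  \<open>e_4\<close> gives the components of \<open>m 2\<close> in the normal plane:
  \<open>dk/dt = rho cspeed (m 2 \<bullet> N)\<close> and \<open>k tau |F'| = rho cspeed (m 2 \<bullet> B)\<close>.\<close>

lemma drho: "(rho has_real_derivative cspeed t * E 1 t $ 1) (at t)"
proof -
  have "rho = (\<lambda>u. E 0 u $ 1)" by (auto simp: rho_def)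
  then show ?thesis using hvd_nth[OF dE0[of t], of 1] by simp
qed

lemma curv_deriv: "(curv F has_real_derivative rho t * cspeed t * (m 2 t \<bullet> N t)) (at t)"
proof -
  have curv_fun: "curv F = (\<lambda>u. rho u * (m 4 u \<bullet> N u))"
  proof
    fix u show "curv F u = rho u * (m 4 u \<bullet> N u)" using rho_pos[of u] by (simp add: m4N)
  qed
  have m4'N: "(cspeed t *\<^sub>R (mu1 t *\<^sub>R m 1 t + m 2 t) - E 4 t $ 1 *\<^sub>R vel t) \<bullet> N t
      = cspeed t * (m 2 t \<bullet> N t)"
    by (simp add: inner_diff_left inner_add_left m1T TN velN)
  have d: "(curv F has_real_derivative
      (cspeed t * E 1 t $ 1) * (m 4 t \<bullet> N t)
      + rho t * (m 4 t \<bullet> Nd t + cspeed t * (m 2 t \<bullet> N t))) (at t)"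
    unfolding curv_fun
    using DERIV_mult[OF drho[of t] hvd_inner[OF dm4[of t] dN[of t]]] by (simp add: m4'N mult.commute)
  have "(cspeed t * E 1 t $ 1) * (m 4 t \<bullet> N t) + rho t * (m 4 t \<bullet> Nd t) = 0"
    using rho_pos[of t] vel_nz[of t] cspeed_pos[of t]
    by (simp add: m4N m4Nd curv_eq cspeed_eq power3_eq_cube field_simps)
  then have "(cspeed t * E 1 t $ 1) * (m 4 t \<bullet> N t)
      + rho t * (m 4 t \<bullet> Nd t + cspeed t * (m 2 t \<bullet> N t)) = rho t * cspeed t * (m 2 t \<bullet> N t)"
    by (simp add: algebra_simps)
  then show ?thesis using d by simp
qed

lemma m2B: "m 2 t \<bullet> B t = curv F t * tors F t * norm (vel t) / (rho t * cspeed t)"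
proof -
  have m4'B: "(cspeed t *\<^sub>R (mu1 t *\<^sub>R m 1 t + m 2 t) - E 4 t $ 1 *\<^sub>R vel t) \<bullet> B t
      = cspeed t * (m 2 t \<bullet> B t)"
    by (simp add: inner_diff_left inner_add_left m1T TB velB)
  have const: "(\<lambda>u. m 4 u \<bullet> B u) = (\<lambda>u. 0)" by (simp add: m4B)
  have "((\<lambda>u. m 4 u \<bullet> B u) has_real_derivative (m 4 t \<bullet> Bd t + cspeed t * (m 2 t \<bullet> B t))) (at t)"
    using hvd_inner[OF dm4[of t] dB[of t]] by (simp add: m4'B)
  then have "m 4 t \<bullet> Bd t + cspeed t * (m 2 t \<bullet> B t) = 0"
    unfolding const using DERIV_unique DERIV_const by blast
  then show ?thesis
    using rho_pos[of t] vel_nz[of t] cspeed_pos[of t]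
    by (simp add: m4Bd curv_eq cspeed_eq power2_eq_square power3_eq_cube field_simps)
qed

text \<open>Orientation: \<open>det e > 0\<close> on \<open>Moeb3\<close> and \<open>det e\<close> is the triple product of \<open>m 1, m 2, m 3\<close>,
  so the orthonormal frame \<open>(T, m 2, m 3)\<close> is positive and \<open>m 3 = T \<times> m 2\<close>.\<close>

lemma triple_m_pos: "m 1 t \<bullet> cross3 (m 2 t) (m 3 t) > 0"
proof -
  have "det (e t) = spatial (fv (e t) 1) (F t)
      \<bullet> cross3 (spatial (fv (e t) 2) (F t)) (spatial (fv (e t) 3) (F t))"
    by (rule det_adapted_frame[of "e t" "rho t" "F t"])
      (use E0[of t] rho_pos[of t] gram[of t] in \<open>simp_all add: E_def\<close>)
  then have "det (e t) = m 1 t \<bullet> cross3 (m 2 t) (m 3 t)"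
    by (simp add: m_def E_def)
  then show ?thesis using moeb_det[OF moeb[of t]] by simp
qed

lemma m3_eq: "m 3 t = cross3 (T t) (m 2 t)"
proof -
  have m22: "m 2 t \<bullet> m 2 t = 1" by (rule gram_m(2))
  have Tm2: "T t \<bullet> m 2 t = 0" and m3T: "m 3 t \<bullet> T t = 0"
    using gram_m(4,5)[of t] m1T[of t] by (simp_all add: inner_commute)
  define l where "l = m 3 t \<bullet> cross3 (T t) (m 2 t)"
  have ex: "m 3 t = l *\<^sub>R cross3 (T t) (m 2 t)"
    using orth_expand[OF TT m22 Tm2, of "m 3 t"] m3T gram_m(6)[of t]
    by (simp add: l_def inner_commute)
  have "1 = m 3 t \<bullet> m 3 t" using gram_m(3)[of t] by simp
  also have "\<dots> = l * l" using cross_unit[OF TT m22 Tm2] by (subst (1 2) ex) simp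
  finally have l2: "l * l = 1" by simp
  have "m 1 t \<bullet> cross3 (m 2 t) (m 3 t) = l"
    using cross_triple[of "T t" "m 2 t" "m 3 t"] m1T[of t]
    by (simp add: l_def inner_commute)
  then have "l > 0" using triple_m_pos[of t] by simp
  moreover have "l = 1 \<or> l = -1" using l2 square_eq_1_iff by blast
  ultimately have "l = 1" by auto
  then show ?thesis using ex by simp
qed

definition cN :: "real \<Rightarrow> real" where "cN t = m 2 t \<bullet> N t"
definition cB :: "real \<Rightarrow> real" where "cB t = m 2 t \<bullet> B t"

lemma m2T: "m 2 t \<bullet> T t = 0"
  using gram_m(4)[of t] m1T[of t] by (simp add: inner_commute)

lemma m2_exp: "m 2 t = cN t *\<^sub>R N t + cB t *\<^sub>R B t"
  using expandTNB[of "m 2 t" t] m2T[of t] by (simp add: cN_def cB_def)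

lemma m3_exp: "m 3 t = cN t *\<^sub>R B t - cB t *\<^sub>R N t"
  using m3_eq[of t] m2_exp[of t] by (simp add: cross_add_right cross_mult_right TxN TxB)

lemma cN_cB_unit: "(cN t)^2 + (cB t)^2 = 1"
proof -
  have "1 = m 2 t \<bullet> m 2 t" using gram_m(2)[of t] by simp
  also have "\<dots> = (cN t)^2 + (cB t)^2"
    by (subst (1 2) m2_exp) (simp add: inner_add_left inner_add_right NN BB NB BN power2_eq_square)
  finally show ?thesis by simp
qed

text \<open>The key computation: \<open>m 2\<close> turns against the normal frame \<open>(N, B)\<close> with angular velocity
  \<open>omega = mu_2 ds/dt - tau ds_e/dt\<close>, the difference of the two integrands of the theorem.\<close>

definition omega :: "real \<Rightarrow> real" where
  "omega t = mu2 t * deriv s t - tors F t * speed F t"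

lemma has_deriv_cN: "(cN has_real_derivative - cB t * omega t) (at t)"
proof -
  have d: "(cN has_real_derivative
          (m 2 t \<bullet> Nd t + ((cspeed t * mu2 t) *\<^sub>R m 3 t - E 2 t $ 1 *\<^sub>R vel t) \<bullet> N t)) (at t)"
    unfolding cN_def[abs_def] by (rule hvd_inner[OF dm2 dN])
  have a: "m 2 t \<bullet> Nd t = cB t * tors F t * norm (vel t)"
    by (simp add: Nd_eq inner_add_right inner_diff_right m2T cB_def)
  have b: "((cspeed t * mu2 t) *\<^sub>R m 3 t - E 2 t $ 1 *\<^sub>R vel t) \<bullet> N t = - cspeed t * mu2 t * cB t"
    by (simp add: m3_exp inner_diff_left BN NN velN)
  have "m 2 t \<bullet> Nd t + ((cspeed t * mu2 t) *\<^sub>R m 3 t - E 2 t $ 1 *\<^sub>R vel t) \<bullet> N t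
      = - cB t * omega t"
    unfolding a b by (simp add: omega_def cspeed_def speed_eq algebra_simps)
  then show ?thesis using d by simp
qed

lemma has_deriv_cB: "(cB has_real_derivative cN t * omega t) (at t)"
proof -
  have d: "(cB has_real_derivative
          (m 2 t \<bullet> Bd t + ((cspeed t * mu2 t) *\<^sub>R m 3 t - E 2 t $ 1 *\<^sub>R vel t) \<bullet> B t)) (at t)"
    unfolding cB_def[abs_def] by (rule hvd_inner[OF dm2 dB])
  have a: "m 2 t \<bullet> Bd t = - cN t * tors F t * norm (vel t)"
    by (simp add: Bd_eq cN_def)
  have b: "((cspeed t * mu2 t) *\<^sub>R m 3 t - E 2 t $ 1 *\<^sub>R vel t) \<bullet> B t = cspeed t * mu2 t * cN t"
    by (simp add: m3_exp inner_diff_left BB NB velB)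
  have "m 2 t \<bullet> Bd t + ((cspeed t * mu2 t) *\<^sub>R m 3 t - E 2 t $ 1 *\<^sub>R vel t) \<bullet> B t
      = cN t * omega t"
    unfolding a b by (simp add: omega_def cspeed_def speed_eq algebra_simps)
  then show ?thesis using d by simp
qed

lemma omega_winding: "omega t = cN t * (cN t * omega t) - cB t * (- cB t * omega t)"
proof -
  have "cN t * (cN t * omega t) - cB t * (- cB t * omega t) = ((cN t)^2 + (cB t)^2) * omega t"
    by (simp add: power2_eq_square algebra_simps)
  then show ?thesis using cN_cB_unit[of t] by simp
qed

text \<open>The angle is determined by Euclidean invariants: \<open>(cN, cB)\<close> is the unit vector in the
  direction of \<open>(dk/dt, k tau |F'|)\<close>, which is nonzero since \<open>rho cspeed > 0\<close>.\<close>

lemma angle_formula: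
  defines "R t \<equiv> sqrt ((deriv (curv F) t)^2 + (curv F t * tors F t * norm (vel t))^2)"
  shows "cN t = deriv (curv F) t / R t"
    and "cB t = curv F t * tors F t * norm (vel t) / R t"
proof -
  have pos: "rho t * cspeed t > 0" using rho_pos[of t] cspeed_pos[of t] by simp
  have dk: "deriv (curv F) t = rho t * cspeed t * cN t"
    using DERIV_imp_deriv[OF curv_deriv] by (simp add: cN_def)
  have kt: "curv F t * tors F t * norm (vel t) = rho t * cspeed t * cB t"
    using rho_pos[of t] cspeed_pos[of t] by (simp add: cB_def m2B)
  have "(deriv (curv F) t)^2 + (curv F t * tors F t * norm (vel t))^2
      = (rho t * cspeed t)^2 * ((cN t)^2 + (cB t)^2)"
    unfolding dk kt by (simp add: power_mult_distrib distrib_left)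
  then have R: "R t = rho t * cspeed t"
    using cN_cB_unit[of t] pos by (simp add: R_def)
  show "cN t = deriv (curv F) t / R t"
    using rho_pos[of t] cspeed_pos[of t] by (simp add: R dk)
  show "cB t = curv F t * tors F t * norm (vel t) / R t"
    using rho_pos[of t] cspeed_pos[of t] by (simp add: R kt)
qed

lemma cont_conformal_integrand: "continuous_on UNIV (\<lambda>t. mu2 t * deriv s t)"
proof -
  have "deriv s = vd s"
    using deriv_vd smooth_diff[OF smooth_s] by (auto simp: fun_eq_iff)
  then show ?thesis
    using smooth_isCont[OF smooth_mu2] smooth_isCont[OF smooth_vd[OF smooth_s]]
    by (auto intro!: continuous_at_imp_continuous_on continuous_intros)
qed

lemma cont_omega: "continuous_on UNIV omega"
  unfolding omega_def[abs_def]
  by (intro continuous_on_diff cont_conformal_integrand cont_tors_speed)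

text \<open>For a closed curve the angle returns to its initial value, so the total rotation of
  \<open>m 2\<close> relative to \<open>(N, B)\<close> over a period is a multiple of \<open>2 pi\<close>.\<close>

lemma total_rotation:
  assumes p: "p > 0" and per: "\<forall>t. F (t + p) = F t"
  shows "\<exists>n::int. integral {0..p} omega = 2 * pi * of_int n"
proof -
  have curv_diff: "curv F differentiable at t" for t
    using curv_deriv[of t] by (meson has_field_derivative_imp_has_derivative differentiableI)
  have curv_p: "\<forall>t. curv F (t + p) = curv F t" using frenet_periodic(2)[OF per] by simp
  have dcurv_p: "deriv (curv F) p = deriv (curv F) 0"
    using deriv_vd[OF curv_diff[of 0]] deriv_vd[OF curv_diff[of p]]
      vd_periodic[OF curv_p curv_diff[of 0]] by simp
  have "cN p = cN 0" "cB p = cB 0"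
    using angle_formula[of p] angle_formula[of 0] dcurv_p frenet_periodic[OF per, of 0] by simp_all
  then show ?thesis
    by (intro winding_number_integral[of p cN _ cB])
      (use p has_deriv_cN has_deriv_cB cN_cB_unit cont_omega omega_winding in auto)
qed

end

text \<open>The genericity hypothesis is what makes the
  conformal frame exist; given the frame, the proof does not need it again (indeed
  \<open>angle_formula\<close> shows that \<open>(k', k tau)\<close> never vanishes).\<close>

theorem mainTheorem3:
  fixes F :: "real \<Rightarrow> real^3" and p :: real
    and e :: "real \<Rightarrow> real^5^5" and s mu1 mu2 :: "real \<Rightarrow> real"
  assumes smoothF: "smooth F"
    and period: "p > 0" "\<forall>t. F (t + p) = F t"
    and regular: "\<forall>t. vd F t \<noteq> 0"
    and curv_nz: "\<forall>t. curv F t \<noteq> 0"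
    and generic: "\<forall>t. (curv_e' F t)^2 + (curv F t)^2 * (tors F t)^2 \<noteq> 0"
    and frame: "conformal_frenet F e s mu1 mu2"
  shows "\<exists>m::int.
    (1 / (2*pi)) * integral {0..p} (\<lambda>t. mu2 t * deriv s t)
  - (1 / (2*pi)) * integral {0..p} (\<lambda>t. tors F t * speed F t) = of_int m"
proof -
  interpret curve_with_frame F e s mu1 mu2
    using smoothF regular curv_nz frame by unfold_locales
  obtain n :: int where n: "integral {0..p} omega = 2 * pi * of_int n"
    using total_rotation[OF period] by blast
  have "(\<lambda>t. mu2 t * deriv s t) integrable_on {0..p}"
    by (rule integrable_continuous_interval[OF continuous_on_subset[OF cont_conformal_integrand]]) simp
  moreover have "(\<lambda>t. tors F t * speed F t) integrable_on {0..p}"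
    by (rule integrable_continuous_interval[OF continuous_on_subset[OF cont_tors_speed]]) simp
  ultimately have "integral {0..p} (\<lambda>t. mu2 t * deriv s t)
      - integral {0..p} (\<lambda>t. tors F t * speed F t) = 2 * pi * of_int n"
    using n by (simp add: omega_def[abs_def] integral_diff)
  then show ?thesis
    by (intro exI[of _ n]) (simp add: field_simps)
qed

end
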